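(* Let $f:\mathcal D\subset\Omega\times(0,\infty)\to\Omega\times(0,\infty)$ be a measure-preserving embedding and suppose there exist $W\in\mathcal C^1_\psi(\Omega\times(0,\infty))$, constants $\beta,\delta>0$ and a decreasing bounded function $k:(0,\infty)\to\mathbb R$ with $\lim_{r\to\infty}k(r)=0$ such that $\beta\le\partial_rW\le\delta$ on $\Omega\times(0,\infty)$ and $W(f(\omega,r))\le W(\omega,r)+k(r)$ on $\mathcal D$. Then there is a measurable set $\mathcal Z\subset\mathcal U$ with $(\mu_\Omega\otimes\lambda)(\mathcal Z)=0$ such that $\liminf_{n\to\infty}r_n<\infty$ for every $(\omega_0,r_0)\in\mathcal U\setminus\mathcal Z$. In particular the set $\mathcal E=\{(\omega_0,r_0)\in\mathcal D_\infty:\lim_{n\to\infty}r_n=\infty\}$ satisfies $\mathcal E\subset\mathcal Z$ and has $\mu_\Omega\otimes\lambda$-measure zero.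
   Context: $\Omega$ is a commutative (written additively), compact, metrizable topological group, and $\psi:\mathbb R\to\Omega$ is a continuous group homomorphism with $\psi(\mathbb R)$ dense. $\mu_\Omega$ is the Haar probability measure of $\Omega$ and $\lambda$ Lebesgue measure on $\mathbb R$. For $U:\Omega\to\mathbb R$, $\partial_\psi U(\omega)=\lim_{t\to0}\frac{U(\omega+\psi(t))-U(\omega)}{t}$; $\mathcal C^1_\psi(\Omega)$ is the space of continuous $U$ with $\partial_\psi U$ existing everywhere and continuous; $\mathcal C^1_\psi(\Omega\times(0,\infty))$ is the set of $W(\omega,r)$ with $W(\cdot,r)\in\mathcal C^1_\psi(\Omega)$ for all $r$ and $W(\omega,\cdot)\in\mathcal C^1(0,\infty)$ for all $\omega$. A measure-preserving embedding is a continuous injective map $f:\mathcal D\to\Omega\times(0,\infty)$, $\mathcal D\subset\Omega\times(0,\infty)$ open, with $(\mu_\Omega\otimes\lambda)(f(\mathcal B))=(\mu_\Omega\otimes\lambda)(\mathcal B)$ for Borel $\mathcal B\subset\mathcal D$. Set $\mathcal D_1=\mathcal D$, $\mathcal D_{n+1}=f^{-1}(\mathcal D_n)$, $\mathcal D_\infty=\bigcap_n\mathcal D_n$; for $(\omega_0,r_0)\in\mathcal D_\infty$ write $(\omega_n,r_n)=f^n(\omega_0,r_0)$, and $\mathcal U=\{(\omega_0,r_0)\in\mathcal D_\infty:\limsup_{n\to\infty}r_n=\infty\}$. *)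

theory Defs
  imports "HOL-Analysis.Analysis" "HOL-Probability.Probability"
begin

definition haar_prob :: "'a::{topological_space, ab_group_add} measure \<Rightarrow> bool" where
  "haar_prob M \<longleftrightarrow> prob_space M \<and> sets M = sets borel \<and>
     (\<forall>x. \<forall>A\<in>sets borel. emeasure M ((\<lambda>y. x + y) ` A) = emeasure M A)"

definition psi_deriv :: "(real \<Rightarrow> 'a::ab_group_add) \<Rightarrow> ('a \<Rightarrow> real) \<Rightarrow> 'a \<Rightarrow> real \<Rightarrow> bool" where
  "psi_deriv psi U w D \<longleftrightarrow> ((\<lambda>t. U (w + psi t)) has_real_derivative D) (at 0)"

definition C1_psi :: "(real \<Rightarrow> 'a::{topological_space, ab_group_add}) \<Rightarrow> ('a \<Rightarrow> real) \<Rightarrow> bool" where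
  "C1_psi psi U \<longleftrightarrow> continuous_on UNIV U \<and>
     (\<exists>dU. continuous_on UNIV dU \<and> (\<forall>w. psi_deriv psi U w (dU w)))"

definition C1_psi_r :: "(real \<Rightarrow> 'a::{topological_space, ab_group_add}) \<Rightarrow> ('a \<Rightarrow> real \<Rightarrow> real) \<Rightarrow> bool" where
  "C1_psi_r psi W \<longleftrightarrow> (\<forall>r>0. C1_psi psi (\<lambda>w. W w r)) \<and>
     (\<forall>w. \<exists>W'. (\<forall>r>0. (W w has_real_derivative W' r) (at r)) \<and> continuous_on {0<..} W')"

definition mp_embedding :: "('a::topological_space \<times> real) measure \<Rightarrow> ('a \<times> real) set \<Rightarrow> ('a \<times> real \<Rightarrow> 'a \<times> real) \<Rightarrow> bool"
  where "mp_embedding M D f \<longleftrightarrow>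
     open D \<and> D \<subseteq> UNIV \<times> {0<..} \<and> continuous_on D f \<and> inj_on f D \<and> f ` D \<subseteq> UNIV \<times> {0<..} \<and>
     (\<forall>B\<in>sets borel. B \<subseteq> D \<longrightarrow> emeasure M (f ` B) = emeasure M B)"

text \<open>Dom f D n is D_{n+1}: Dom 0 = D, Dom (n+1) = f^{-1}(Dom n) (preimage inside D).\<close>
fun Dom :: "('b \<Rightarrow> 'b) \<Rightarrow> 'b set \<Rightarrow> nat \<Rightarrow> 'b set" where
  "Dom f D 0 = D"
| "Dom f D (Suc n) = {x\<in>D. f x \<in> Dom f D n}"

definition Dinf :: "('b \<Rightarrow> 'b) \<Rightarrow> 'b set \<Rightarrow> 'b set" where
  "Dinf f D = (\<Inter>n. Dom f D n)"

definition rseq :: "('a \<times> real \<Rightarrow> 'a \<times> real) \<Rightarrow> 'a \<times> real \<Rightarrow> nat \<Rightarrow> real" where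
  "rseq f x n = snd ((f ^^ n) x)"

definition Uset :: "('a \<times> real \<Rightarrow> 'a \<times> real) \<Rightarrow> ('a \<times> real) set \<Rightarrow> ('a \<times> real) set" where
  "Uset f D = {x\<in>Dinf f D. limsup (\<lambda>n. ereal (rseq f x n)) = \<infinity>}"

definition Eset :: "('a \<times> real \<Rightarrow> 'a \<times> real) \<Rightarrow> ('a \<times> real) set \<Rightarrow> ('a \<times> real) set" where
  "Eset f D = {x\<in>Dinf f D. filterlim (rseq f x) at_top sequentially}"

end

theory Submission
  imports Defs
begin

text \<open>
  Extend f by the identity outside D to a measurable map F and measure heights by the
  Lyapunov function V = W, which is comparable to r.  For an escaping orbit and a level a,
  call a point of the orbit its last visit to {V \<le> a}.  By injectivity and measure
  preservation the set of such last-visit points grows in measure with a.  Once a is large,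
  the bound W \<circ> f \<le> W + k with k \<rightarrow> 0 makes f map the last-visit sets of the levels
  a, a + e, ..., a + (N - 1) e disjointly into {V \<le> a + N e}, whose measure grows only
  linearly in a + N e; for e small compared to the measure of the level-a set this fails for
  large N, so every last-visit set is null.  Every escaping orbit passes through one of the
  countably many last-visit sets of integer levels.
\<close>

lemma sets_pair_lborel_eq_borel:
  fixes M :: "'a::topological_space measure"
  assumes M: "sets M = sets borel"
  shows "sets (M \<Otimes>\<^sub>M lborel) = sets (borel :: ('a \<times> real) measure)"
proof
  show "sets (M \<Otimes>\<^sub>M lborel) \<subseteq> sets (borel :: ('a \<times> real) measure)"
    by (rule sets_pair_in_sets) (use M in \<open>auto intro: borel_Times\<close>)
  \<comment> \<open>By the tube lemma each A s t is open, and every open U is the countable union of the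
     rectangles A s t \<times> {s<..<t} over rational s < t.\<close>
  have open_in_pair: "U \<in> sets (M \<Otimes>\<^sub>M lborel)" if U: "open U" for U :: "('a \<times> real) set"
  proof -
    define A where "A s t = {w. {w} \<times> {s..t} \<subseteq> U}" for s t :: real
    have "open (A s t)" for s t
    proof (rule Topological_Spaces.openI)
      fix w assume "w \<in> A s t"
      then obtain X where "w \<in> X" "open X" "X \<times> {s..t} \<subseteq> U"
        using Elementary_Topology.tube_lemma[OF compact_Icc U, of w s t] unfolding A_def by auto
      then show "\<exists>X. open X \<and> w \<in> X \<and> X \<subseteq> A s t" by (auto simp: A_def)
    qed
    then have A: "A s t \<times> {s<..<t} \<in> sets (M \<Otimes>\<^sub>M lborel)" for s t
      using M by (intro pair_measureI) auto
    have "U = (\<Union>(s, t) \<in> \<rat> \<times> \<rat>. A s t \<times> {s<..<t})"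
    proof (intro equalityI subsetI)
      fix x assume "x \<in> U"
      obtain w r where x: "x = (w, r)" by fastforce
      have "open {r. (w, r) \<in> U}"
        by (rule open_vimage[OF U, of "Pair w", unfolded vimage_def]) (intro continuous_intros)
      then obtain e where "e > 0" and e: "ball r e \<subseteq> {r. (w, r) \<in> U}"
        using \<open>x \<in> U\<close> x by (auto simp: open_contains_ball)
      obtain s where s: "s \<in> \<rat>" "r - e < s" "s < r" using Rats_dense_in_real[of "r - e" r] \<open>e > 0\<close> by auto
      obtain t where t: "t \<in> \<rat>" "r < t" "t < r + e" using Rats_dense_in_real[of r "r + e"] \<open>e > 0\<close> by auto
      have "{s..t} \<subseteq> ball r e" using s t by (auto simp: dist_real_def)
      then have "w \<in> A s t" using e by (auto simp: A_def)
      then show "x \<in> (\<Union>(s, t) \<in> \<rat> \<times> \<rat>. A s t \<times> {s<..<t})"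
        using x s t by (intro UN_I[of "(s, t)"]) auto
    qed (fastforce simp: A_def)
    also have "\<dots> \<in> sets (M \<Otimes>\<^sub>M lborel)"
      using A by (intro sets.countable_UN'' countable_SIGMA countable_rat) auto
    finally show ?thesis .
  qed
  have "space (M \<Otimes>\<^sub>M lborel) = UNIV"
    using M by (simp add: space_pair_measure sets_eq_imp_space_eq[OF M])
  then show "sets (borel :: ('a \<times> real) measure) \<subseteq> sets (M \<Otimes>\<^sub>M lborel)"
    unfolding sets_borel using open_in_pair by (intro sets.sigma_sets_subset') auto
qed

lemma increment_bounds_of_deriv_bounds:
  fixes g :: "real \<Rightarrow> real"
  assumes deriv: "\<And>t. 0 < t \<Longrightarrow> \<exists>d. (g has_real_derivative d) (at t) \<and> beta \<le> d \<and> d \<le> delta"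
    and "0 < r" "r \<le> s"
  shows "beta * (s - r) \<le> g s - g r" "g s - g r \<le> delta * (s - r)"
proof -
  have "(\<lambda>t. g t - beta * t) r \<le> (\<lambda>t. g t - beta * t) s"
  proof (rule DERIV_nonneg_imp_nondecreasing[OF \<open>r \<le> s\<close>])
    fix t assume "r \<le> t"
    then obtain d where "(g has_real_derivative d) (at t)" "beta \<le> d"
      using deriv[of t] \<open>0 < r\<close> by auto
    then show "\<exists>y. ((\<lambda>t. g t - beta * t) has_real_derivative y) (at t) \<and> 0 \<le> y"
      by (intro exI[of _ "d - beta"]) (auto intro!: derivative_eq_intros)
  qed
  then show "beta * (s - r) \<le> g s - g r" by (simp add: algebra_simps)
  have "(\<lambda>t. delta * t - g t) r \<le> (\<lambda>t. delta * t - g t) s"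
  proof (rule DERIV_nonneg_imp_nondecreasing[OF \<open>r \<le> s\<close>])
    fix t assume "r \<le> t"
    then obtain d where "(g has_real_derivative d) (at t)" "d \<le> delta"
      using deriv[of t] \<open>0 < r\<close> by auto
    then show "\<exists>y. ((\<lambda>t. delta * t - g t) has_real_derivative y) (at t) \<and> 0 \<le> y"
      by (intro exI[of _ "delta - d"]) (auto intro!: derivative_eq_intros)
  qed
  then show "g s - g r \<le> delta * (s - r)" by (simp add: algebra_simps)
qed

lemma abs_increment_le_of_deriv_bounds:
  fixes g :: "real \<Rightarrow> real"
  assumes deriv: "\<And>t. 0 < t \<Longrightarrow> \<exists>d. (g has_real_derivative d) (at t) \<and> beta \<le> d \<and> d \<le> delta"
    and "0 \<le> beta" "0 < r" "0 < s"
  shows "\<bar>g s - g r\<bar> \<le> delta * \<bar>s - r\<bar>"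
proof -
  have "0 \<le> g t - g u \<and> g t - g u \<le> delta * (t - u)" if "0 < u" "u \<le> t" for t u
    using increment_bounds_of_deriv_bounds[OF deriv that] \<open>0 \<le> beta\<close> that
    by (smt (verit) mult_nonneg_nonneg)
  from this[of r s] this[of s r] \<open>0 < r\<close> \<open>0 < s\<close> show ?thesis
    by (cases "r \<le> s") (auto simp: abs_if algebra_simps)
qed

lemma affine_bounds_of_deriv_bounds:
  fixes g :: "real \<Rightarrow> real"
  assumes deriv: "\<And>t. 0 < t \<Longrightarrow> \<exists>d. (g has_real_derivative d) (at t) \<and> beta \<le> d \<and> d \<le> delta"
    and "0 \<le> beta" "0 < r"
  shows "beta * r - (beta + delta + \<bar>g 1\<bar>) \<le> g r" "g r \<le> delta * r + \<bar>g 1\<bar>"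
proof -
  have "beta \<le> delta" using deriv[of 1] by auto
  have "0 \<le> delta * r" using \<open>beta \<le> delta\<close> \<open>0 \<le> beta\<close> \<open>0 < r\<close> by simp
  have "beta * r \<le> beta" if "r \<le> 1" using that \<open>0 \<le> beta\<close> by (simp add: mult_left_le)
  have abs_g1: "g 1 \<le> \<bar>g 1\<bar>" "- g 1 \<le> \<bar>g 1\<bar>" by auto
  note below = increment_bounds_of_deriv_bounds[OF deriv \<open>0 < r\<close>, of 1]
    and above = increment_bounds_of_deriv_bounds[OF deriv zero_less_one, of r]
  show "beta * r - (beta + delta + \<bar>g 1\<bar>) \<le> g r"
  proof (cases "r \<le> 1")
    case True
    then have "g 1 - g r \<le> delta - delta * r" using below(2) by (simp add: algebra_simps)
    then show ?thesis using \<open>r \<le> 1 \<Longrightarrow> beta * r \<le> beta\<close> True \<open>0 \<le> delta * r\<close> abs_g1 by linarith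
  next
    case False
    then have "beta * r - beta \<le> g r - g 1" using above(1) by (simp add: algebra_simps)
    then show ?thesis using \<open>beta \<le> delta\<close> \<open>0 \<le> beta\<close> abs_g1 by linarith
  qed
  show "g r \<le> delta * r + \<bar>g 1\<bar>"
  proof (cases "r \<le> 1")
    case True
    then have "beta - beta * r \<le> g 1 - g r" using below(1) by (simp add: algebra_simps)
    then show ?thesis using \<open>r \<le> 1 \<Longrightarrow> beta * r \<le> beta\<close> True \<open>0 \<le> delta * r\<close> abs_g1 by linarith
  next
    case False
    then have "g r - g 1 \<le> delta * r - delta" using above(2) by (simp add: algebra_simps)
    then show ?thesis using \<open>beta \<le> delta\<close> \<open>0 \<le> beta\<close> abs_g1 by linarith
  qed
qed

lemma continuous_on_Lipschitz_in_second:
  fixes W :: "'a::metric_space \<Rightarrow> real \<Rightarrow> real"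
  assumes cont: "\<And>r. r \<in> S \<Longrightarrow> continuous_on UNIV (\<lambda>w. W w r)"
    and lip: "\<And>w r s. r \<in> S \<Longrightarrow> s \<in> S \<Longrightarrow> \<bar>W w s - W w r\<bar> \<le> L * \<bar>s - r\<bar>"
  shows "continuous_on (UNIV \<times> S) (\<lambda>x. W (fst x) (snd x))"
  unfolding continuous_on_iff
proof (intro ballI allI impI)
  fix x :: "'a \<times> real" and e :: real
  assume "x \<in> UNIV \<times> S" and "0 < e"
  obtain w0 r0 where x: "x = (w0, r0)" and "r0 \<in> S" using \<open>x \<in> UNIV \<times> S\<close> by auto
  obtain d1 where "0 < d1" and d1: "\<And>w. dist w w0 < d1 \<Longrightarrow> dist (W w r0) (W w0 r0) < e / 2"
    using cont[OF \<open>r0 \<in> S\<close>] \<open>0 < e\<close> unfolding continuous_on_iff by (metis UNIV_I half_gt_zero)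
  define d where "d = min d1 (e / (2 * (\<bar>L\<bar> + 1)))"
  have "0 < d" using \<open>0 < d1\<close> \<open>0 < e\<close> by (simp add: d_def)
  moreover have "dist (W (fst y) (snd y)) (W (fst x) (snd x)) < e"
    if "y \<in> UNIV \<times> S" "dist y x < d" for y
  proof -
    obtain w r where y: "y = (w, r)" and "r \<in> S" using \<open>y \<in> UNIV \<times> S\<close> by auto
    have "dist w w0 < d1" "\<bar>r - r0\<bar> < e / (2 * (\<bar>L\<bar> + 1))"
      using \<open>dist y x < d\<close> dist_fst_le[of y x] dist_snd_le[of y x]
      by (auto simp: x y d_def dist_real_def)
    have "\<bar>W w r - W w r0\<bar> \<le> (\<bar>L\<bar> + 1) * \<bar>r - r0\<bar>"
      using lip[OF \<open>r0 \<in> S\<close> \<open>r \<in> S\<close>, of w] by (smt (verit) abs_ge_zero mult_right_mono)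
    also have "\<dots> < (\<bar>L\<bar> + 1) * (e / (2 * (\<bar>L\<bar> + 1)))"
      using \<open>\<bar>r - r0\<bar> < _\<close> by (intro mult_strict_left_mono) auto
    also have "\<dots> = e / 2" by (simp add: field_simps add_pos_nonneg)
    finally show ?thesis
      using d1[OF \<open>dist w w0 < d1\<close>] abs_triangle_ineq[of "W w r - W w r0" "W w r0 - W w0 r0"]
      by (simp add: x y dist_real_def)
  qed
  ultimately show "\<exists>d>0. \<forall>y\<in>UNIV \<times> S. dist y x < d \<longrightarrow> dist (W (fst y) (snd y)) (W (fst x) (snd x)) < e"
    by blast
qed

lemma disjoint_family_if_lt:
  fixes A :: "'i::linorder \<Rightarrow> 'a set"
  assumes "\<And>m n. m < n \<Longrightarrow> A m \<inter> A n = {}"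
  shows "disjoint_family A"
  unfolding disjoint_family_on_def by (metis Int_commute assms linorder_neqE)

lemma image_sets_of_emeasure_preserving:
  assumes inj: "inj_on f A" and A: "A \<in> sets M" "emeasure M A \<noteq> 0"
    and preserving: "\<And>B. B \<in> sets M \<Longrightarrow> B \<subseteq> A \<Longrightarrow> emeasure M (f ` B) = emeasure M B"
    and B: "B \<in> sets M" "B \<subseteq> A"
  shows "f ` B \<in> sets M"
proof (cases "emeasure M B = 0")
  case True
  then have "emeasure M (A - B) \<noteq> 0"
    using A B by (simp add: emeasure_Diff_null_set null_setsI)
  then have "f ` (A - B) \<in> sets M"
    using preserving[of "A - B"] A B by (intro emeasure_neq_0_sets) auto
  moreover have "f ` A \<in> sets M"
    using preserving[of A] A by (intro emeasure_neq_0_sets) auto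
  moreover have "f ` B = f ` A - f ` (A - B)"
    using inj_on_image_set_diff[OF inj, of A "A - B"] B(2) by (simp add: Diff_Diff_Int Int_absorb1)
  ultimately show ?thesis by auto
next
  case False
  then show ?thesis using preserving[OF B] by (intro emeasure_neq_0_sets) simp
qed

lemma filterlim_at_top_iff_liminf:
  "filterlim g at_top sequentially \<longleftrightarrow> liminf (\<lambda>n. ereal (g n)) = \<infinity>"
  by (simp add: liminf_PInfty[symmetric] tendsto_PInfty_eq_at_top)

lemma filterlim_at_top_of_affine_lower_bound:
  fixes g h :: "nat \<Rightarrow> real"
  assumes "0 < a" "\<And>n. a * g n + b \<le> h n" "filterlim g at_top sequentially"
  shows "filterlim h at_top sequentially"
proof (rule filterlim_at_top_mono[OF _ always_eventually])
  show "filterlim (\<lambda>n. b + a * g n) at_top sequentially"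
    using assms(1,3) by (intro filterlim_tendsto_add_at_top filterlim_tendsto_pos_mult_at_top) auto
qed (use assms(2) in \<open>auto simp: add.commute\<close>)

lemma funpow_diff_apply:
  assumes "m \<le> n"
  shows "(f ^^ m) ((f ^^ (n - m)) x) = (f ^^ n) x" "(f ^^ (n - m)) ((f ^^ m) x) = (f ^^ n) x"
  using funpow_add[of m "n - m" f] funpow_add[of "n - m" m f] assms by (simp_all add: fun_eq_iff)

lemma measurable_funpow: "f \<in> M \<rightarrow>\<^sub>M M \<Longrightarrow> f ^^ n \<in> M \<rightarrow>\<^sub>M M"
  by (induction n) auto

lemma escaping_set_measurable:
  fixes F :: "'a \<Rightarrow> 'a" and V :: "'a \<Rightarrow> real"
  assumes [measurable]: "F \<in> M \<rightarrow>\<^sub>M M" "V \<in> borel_measurable M" "G \<in> sets M"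
  shows "{x \<in> G. filterlim (\<lambda>n. V ((F ^^ n) x)) at_top sequentially} \<in> sets M"
proof -
  have [measurable]: "F ^^ n \<in> M \<rightarrow>\<^sub>M M" for n by (intro measurable_funpow) measurable
  have "{x \<in> G. filterlim (\<lambda>n. V ((F ^^ n) x)) at_top sequentially} =
      {x \<in> space M. x \<in> G \<and> liminf (\<lambda>n. ereal (V ((F ^^ n) x))) = \<infinity>}"
    using sets.sets_into_space[OF assms(3)] by (auto simp: filterlim_at_top_iff_liminf)
  also have "\<dots> \<in> sets M" by measurable
  finally show ?thesis .
qed

locale measure_preserving_lyapunov =
  fixes M :: "'b measure" and F :: "'b \<Rightarrow> 'b" and G :: "'b set" and V :: "'b \<Rightarrow> real"
    and c d :: real
  assumes F_measurable [measurable]: "F \<in> M \<rightarrow>\<^sub>M M"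
    and G_sets [measurable]: "G \<in> sets M"
    and F_G: "\<And>x. x \<in> G \<Longrightarrow> F x \<in> G"
    and inj_F: "inj_on F G"
    and image_sets: "\<And>B. B \<in> sets M \<Longrightarrow> B \<subseteq> G \<Longrightarrow> F ` B \<in> sets M"
    and emeasure_image: "\<And>B. B \<in> sets M \<Longrightarrow> B \<subseteq> G \<Longrightarrow> emeasure M (F ` B) = emeasure M B"
    and V_measurable [measurable]: "V \<in> borel_measurable M"
    and c_pos: "0 < c"
    and emeasure_sublevel: "\<And>a. emeasure M {x \<in> G. V x \<le> a} \<le> ennreal (c * a + d)"
    and V_step: "\<And>e. 0 < e \<Longrightarrow> \<exists>a0. \<forall>x\<in>G. a0 \<le> V (F x) \<longrightarrow> V (F x) \<le> V x + e"
begin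

definition escaping :: "'b set" where
  "escaping = {x \<in> G. filterlim (\<lambda>n. V ((F ^^ n) x)) at_top sequentially}"

definition last_visit :: "real \<Rightarrow> 'b set" where
  "last_visit a = {x \<in> escaping. V x \<le> a \<and> (\<forall>n>0. a < V ((F ^^ n) x))}"

lemma funpow_G: "x \<in> G \<Longrightarrow> (F ^^ n) x \<in> G"
  by (induction n) (auto simp: F_G)

lemma funpow_measurable [measurable]: "F ^^ n \<in> M \<rightarrow>\<^sub>M M"
  by (rule measurable_funpow[OF F_measurable])

lemma escaping_sets [measurable]: "escaping \<in> sets M"
  unfolding escaping_def by (rule escaping_set_measurable) measurable

lemma escaping_funpow:
  assumes "x \<in> escaping" shows "(F ^^ m) x \<in> escaping"
proof -
  have "(\<lambda>n. V ((F ^^ n) ((F ^^ m) x))) = (\<lambda>n. V ((F ^^ (n + m)) x))"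
    by (simp add: funpow_add)
  then show ?thesis
    using assms filterlim_compose[OF _ filterlim_add_const_nat_at_top, of "\<lambda>n. V ((F ^^ n) x)" at_top m]
    by (auto simp: escaping_def funpow_G)
qed

lemma last_visit_sets [measurable]: "last_visit a \<in> sets M"
proof -
  have "last_visit a = {x \<in> space M. x \<in> escaping \<and> V x \<le> a \<and> (\<forall>n. 0 < n \<longrightarrow> a < V ((F ^^ n) x))}"
    using sets.sets_into_space[OF escaping_sets] by (auto simp: last_visit_def)
  also have "\<dots> \<in> sets M" by measurable
  finally show ?thesis .
qed

lemma last_visit_subset_G: "last_visit a \<subseteq> G"
  by (auto simp: last_visit_def escaping_def)

lemma exists_funpow_last_visit:
  assumes "x \<in> escaping" "V x \<le> b"
  obtains m where "(F ^^ m) x \<in> last_visit b"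
proof -
  define K where "K = {n. V ((F ^^ n) x) \<le> b}"
  obtain N where N: "\<And>n. N \<le> n \<Longrightarrow> b + 1 \<le> V ((F ^^ n) x)"
    using assms(1) by (auto simp: escaping_def filterlim_at_top eventually_sequentially)
  have "n < N" if "n \<in> K" for n
  proof (rule ccontr)
    assume "\<not> n < N"
    then have "b + 1 \<le> V ((F ^^ n) x)" using N by simp
    then show False using that by (simp add: K_def)
  qed
  then have "finite K" by (meson finite_nat_set_iff_bounded)
  moreover have "0 \<in> K" using assms(2) by (simp add: K_def)
  ultimately have "Max K \<in> K" and Max: "\<And>n. n \<in> K \<Longrightarrow> n \<le> Max K" by (auto intro: Max_in)
  moreover have "b < V ((F ^^ n) ((F ^^ Max K) x))" if "0 < n" for n
  proof -
    have "n + Max K \<notin> K" using Max that by force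
    then show ?thesis by (simp add: K_def funpow_add)
  qed
  ultimately have "(F ^^ Max K) x \<in> last_visit b"
    using escaping_funpow[OF assms(1)] by (simp add: last_visit_def K_def)
  then show thesis by (rule that)
qed

lemma funpow_image:
  assumes "B \<in> sets M" "B \<subseteq> G"
  shows "(F ^^ n) ` B \<in> sets M \<and> emeasure M ((F ^^ n) ` B) = emeasure M B"
proof (induction n)
  case (Suc n)
  have "(F ^^ n) ` B \<subseteq> G" using assms(2) funpow_G by blast
  moreover have "(F ^^ Suc n) ` B = F ` (F ^^ n) ` B" by (simp add: image_image)
  ultimately show ?case using Suc image_sets emeasure_image by simp
qed (use assms in simp)

lemma inj_on_funpow: "inj_on (F ^^ n) G"
proof (induction n)
  case (Suc n)
  have "inj_on F ((F ^^ n) ` G)" using inj_F by (rule inj_on_subset) (auto simp: funpow_G)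
  with Suc show ?case using comp_inj_on by (fastforce simp: comp_def)
qed simp

text \<open>Each point of last_visit a reaches last_visit b exactly once, and these visits are
  disjoint measure-preserving images inside last_visit b.\<close>
lemma emeasure_last_visit_mono:
  assumes "a \<le> b"
  shows "emeasure M (last_visit a) \<le> emeasure M (last_visit b)"
proof -
  define P where "P n = {x \<in> last_visit a. (F ^^ n) x \<in> last_visit b}" for n
  have P_sets: "P n \<in> sets M" for n
  proof -
    have "P n = {x \<in> space M. x \<in> last_visit a \<and> (F ^^ n) x \<in> last_visit b}"
      using sets.sets_into_space[OF last_visit_sets] by (auto simp: P_def)
    also have "\<dots> \<in> sets M" by measurable
    finally show ?thesis .
  qed
  have P_G: "P n \<subseteq> G" for n using last_visit_subset_G by (auto simp: P_def)
  have "last_visit a \<subseteq> (\<Union>n. P n)"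
  proof
    fix x assume x: "x \<in> last_visit a"
    then have "x \<in> escaping" "V x \<le> b" using \<open>a \<le> b\<close> by (auto simp: last_visit_def)
    then obtain n where "(F ^^ n) x \<in> last_visit b" by (rule exists_funpow_last_visit)
    with x show "x \<in> (\<Union>n. P n)" by (auto simp: P_def)
  qed
  then have "last_visit a = (\<Union>n. P n)" by (auto simp: P_def)
  moreover have "disjoint_family P"
  proof (rule disjoint_family_if_lt, safe)
    fix m n x assume "m < n" "x \<in> P m" "x \<in> P n"
    then have "b < V ((F ^^ (n - m)) ((F ^^ m) x))" "V ((F ^^ n) x) \<le> b"
      by (auto simp: P_def last_visit_def)
    then show "x \<in> {}" using \<open>m < n\<close> by (simp add: funpow_diff_apply)
  qed
  moreover have "disjoint_family (\<lambda>n. (F ^^ n) ` P n)"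
  proof (rule disjoint_family_if_lt, safe)
    fix m n x z assume "m < n" "x \<in> P m" "z \<in> P n" "(F ^^ m) x = (F ^^ n) z"
    then have "(F ^^ m) x = (F ^^ m) ((F ^^ (n - m)) z)" by (simp add: funpow_diff_apply)
    moreover have "x \<in> G" "(F ^^ (n - m)) z \<in> G" using P_G \<open>x \<in> P m\<close> \<open>z \<in> P n\<close> funpow_G by blast+
    ultimately have "x = (F ^^ (n - m)) z" by (rule inj_onD[OF inj_on_funpow])
    moreover have "a < V ((F ^^ (n - m)) z)" "V x \<le> a"
      using \<open>m < n\<close> \<open>x \<in> P m\<close> \<open>z \<in> P n\<close> by (simp_all add: P_def last_visit_def)
    ultimately show "(F ^^ m) x \<in> {}" by simp
  qed
  ultimately have "emeasure M (last_visit a) = emeasure M (\<Union>n. (F ^^ n) ` P n)"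
    using P_sets P_G funpow_image by (simp add: suminf_emeasure[symmetric] image_subset_iff)
  also have "\<dots> \<le> emeasure M (last_visit b)"
    by (rule emeasure_mono) (auto simp: P_def)
  finally show ?thesis .
qed

lemma last_visit_step:
  assumes "0 < e"
  obtains a0 where "\<And>a x. a0 \<le> a \<Longrightarrow> x \<in> last_visit a \<Longrightarrow> a < V (F x) \<and> V (F x) \<le> a + e"
proof -
  obtain a0 where a0: "\<And>x. x \<in> G \<Longrightarrow> a0 \<le> V (F x) \<Longrightarrow> V (F x) \<le> V x + e"
    using V_step[OF assms] by blast
  show thesis
  proof (rule that)
    fix a x assume "a0 \<le> a" "x \<in> last_visit a"
    then have "a < V (F x)" "V x \<le> a" "x \<in> G"
      by (auto simp: last_visit_def escaping_def dest: spec[where x = 1])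
    then show "a < V (F x) \<and> V (F x) \<le> a + e" using a0[of x] \<open>a0 \<le> a\<close> by simp
  qed
qed

lemma emeasure_last_visit_sum_le:
  assumes "0 < e" and "a0 \<le> a"
    and step: "\<And>a x. a0 \<le> a \<Longrightarrow> x \<in> last_visit a \<Longrightarrow> a < V (F x) \<and> V (F x) \<le> a + e"
  shows "(\<Sum>j<N. emeasure M (last_visit (a + real j * e))) \<le> ennreal (c * (a + real N * e) + d)"
proof -
  define L where "L j = last_visit (a + real j * e)" for j
  have step_L: "a + real j * e < V (F x) \<and> V (F x) \<le> a + real (Suc j) * e" if "x \<in> L j" for j x
    using step[of "a + real j * e" x] that \<open>a0 \<le> a\<close> \<open>0 < e\<close> by (simp add: L_def algebra_simps add_increasing2)
  have "disjoint_family L"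
  proof (rule disjoint_family_if_lt, safe)
    fix i j x assume "i < j" "x \<in> L i" "x \<in> L j"
    then have "real (Suc i) * e \<le> real j * e" using \<open>0 < e\<close> by simp
    then show "x \<in> {}" using step_L[OF \<open>x \<in> L i\<close>] step_L[OF \<open>x \<in> L j\<close>] by linarith
  qed
  have L_sets: "L j \<in> sets M" for j by (simp add: L_def)
  have L_G: "(\<Union>j<N. L j) \<subseteq> G" using last_visit_subset_G by (auto simp: L_def)
  have "F ` (\<Union>j<N. L j) \<subseteq> {x \<in> G. V x \<le> a + real N * e}"
  proof safe
    fix j x assume "j < N" "x \<in> L j"
    then show "F x \<in> G" using L_G F_G by blast
    have "real (Suc j) * e \<le> real N * e" using \<open>j < N\<close> \<open>0 < e\<close> by simp
    then show "V (F x) \<le> a + real N * e" using step_L[OF \<open>x \<in> L j\<close>] by linarith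
  qed
  moreover have "{x \<in> G. V x \<le> a + real N * e} \<in> sets M" by measurable
  ultimately have "emeasure M (F ` (\<Union>j<N. L j)) \<le> emeasure M {x \<in> G. V x \<le> a + real N * e}"
    by (rule emeasure_mono)
  moreover have "(\<Sum>j<N. emeasure M (L j)) = emeasure M (F ` (\<Union>j<N. L j))"
    using L_sets L_G disjoint_family_on_mono[OF subset_UNIV \<open>disjoint_family L\<close>]
    by (simp add: sum_emeasure emeasure_image image_subset_iff)
  ultimately show ?thesis
    using emeasure_sublevel[of "a + real N * e"] by (simp add: L_def)
qed

text \<open>If last_visit a had measure at least t > 0, so would N disjoint layers of width
  e = t / (2 c) above a, whose images fill a sublevel set of measure about c (a + N e) + d
  = c a + d + N t / 2; this fails for large N.\<close>
lemma emeasure_last_visit_eq_0: "emeasure M (last_visit a) = 0"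
proof (rule ccontr)
  assume "emeasure M (last_visit a) \<noteq> 0"
  then obtain t where "0 < t" and t: "ennreal t \<le> emeasure M (last_visit a)"
  proof (cases "emeasure M (last_visit a)" rule: ennreal_cases)
    case (real r)
    then show thesis using that[of r] \<open>emeasure M (last_visit a) \<noteq> 0\<close> by simp
  qed (use that[of 1] in simp)
  define e where "e = t / (2 * c)"
  have "0 < e" using c_pos \<open>0 < t\<close> by (simp add: e_def)
  obtain a0 where step: "\<And>a x. a0 \<le> a \<Longrightarrow> x \<in> last_visit a \<Longrightarrow> a < V (F x) \<and> V (F x) \<le> a + e"
    using last_visit_step[OF \<open>0 < e\<close>] by blast
  define a' where "a' = max a a0"
  have "a0 \<le> a'" by (simp add: a'_def)
  obtain N :: nat where N: "2 * \<bar>c * a' + d\<bar> / t < real N" using reals_Archimedean2 by blast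
  have "ennreal (real N * t) = (\<Sum>j<N. ennreal t)"
    using \<open>0 < t\<close> by (subst sum_ennreal) auto
  also have "\<dots> \<le> (\<Sum>j<N. emeasure M (last_visit (a' + real j * e)))"
  proof (rule sum_mono)
    fix j :: nat
    have "a \<le> a' + real j * e" using \<open>0 < e\<close> by (simp add: a'_def add_increasing2)
    then show "ennreal t \<le> emeasure M (last_visit (a' + real j * e))"
      by (rule order_trans[OF t emeasure_last_visit_mono])
  qed
  also have "\<dots> \<le> ennreal (c * (a' + real N * e) + d)"
    using emeasure_last_visit_sum_le[OF \<open>0 < e\<close> \<open>a0 \<le> a'\<close> step] .
  also have "c * (a' + real N * e) + d = c * a' + d + real N * t / 2"
    using c_pos by (simp add: e_def field_simps)
  finally have "ennreal (real N * t) \<le> ennreal (c * a' + d + real N * t / 2)" .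
  then have "(0 \<le> c * a' + d + real N * t / 2 \<and> real N * t \<le> c * a' + d + real N * t / 2) \<or>
      (real N * t \<le> 0 \<and> c * a' + d + real N * t / 2 \<le> 0)"
    by (simp only: ennreal_le_iff2)
  moreover have "2 * \<bar>c * a' + d\<bar> < real N * t" using N \<open>0 < t\<close> by (simp add: pos_divide_less_eq)
  ultimately show False using abs_ge_self[of "c * a' + d"] abs_ge_zero[of "c * a' + d"] by auto
qed

theorem escaping_null: "escaping \<in> null_sets M"
proof -
  define P where "P m n = {x \<in> G. (F ^^ n) x \<in> last_visit (real m)}" for m n :: nat
  have "P m n \<in> null_sets M" for m n
  proof -
    have "P m n = {x \<in> space M. x \<in> G \<and> (F ^^ n) x \<in> last_visit (real m)}"
      using sets.sets_into_space[OF G_sets] by (auto simp: P_def)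
    also have "\<dots> \<in> sets M" by measurable
    finally have "P m n \<in> sets M" .
    moreover have "emeasure M ((F ^^ n) ` P m n) \<le> emeasure M (last_visit (real m))"
      by (rule emeasure_mono) (auto simp: P_def)
    ultimately show ?thesis
      using funpow_image[of "P m n" n] emeasure_last_visit_eq_0
      by (auto simp: P_def null_sets_def)
  qed
  then have "(\<Union>m n. P m n) \<in> null_sets M" by (intro null_sets_UN)
  moreover have "escaping \<subseteq> (\<Union>m n. P m n)"
  proof
    fix x assume "x \<in> escaping"
    obtain m :: nat where "V x \<le> real m" using real_arch_simple by blast
    then obtain n where "(F ^^ n) x \<in> last_visit (real m)"
      using exists_funpow_last_visit[OF \<open>x \<in> escaping\<close>] by blast
    then show "x \<in> (\<Union>m n. P m n)" using \<open>x \<in> escaping\<close> by (auto simp: P_def escaping_def)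
  qed
  ultimately show ?thesis by (rule null_sets_subset[OF _ escaping_sets])
qed

end

lemma Dom_iff: "x \<in> Dom f D n \<longleftrightarrow> (\<forall>j\<le>n. (f ^^ j) x \<in> D)"
proof (induction n arbitrary: x)
  case (Suc n)
  have "(\<forall>j\<le>Suc n. (f ^^ j) x \<in> D) \<longleftrightarrow> x \<in> D \<and> (\<forall>j\<le>n. (f ^^ Suc j) x \<in> D)"
    by (metis (no_types, lifting) Suc_le_mono funpow_0 le0 not0_implies_Suc)
  with Suc.IH[of "f x"] show ?case by (simp add: funpow_Suc_right del: funpow.simps)
qed simp

lemma Dinf_eq: "Dinf f D = {x. \<forall>n. (f ^^ n) x \<in> D}"
  unfolding Dinf_def by (auto simp: Dom_iff) (meson order_refl)

lemma funpow_eq_if_agree: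
  assumes "\<And>y. y \<in> D \<Longrightarrow> g y = f y" "\<And>j. j < n \<Longrightarrow> (f ^^ j) x \<in> D"
  shows "(g ^^ n) x = (f ^^ n) x"
  using assms(2) by (induction n) (auto simp: assms(1))

lemma Eset_subset_Uset: "Eset f D \<subseteq> Uset f D"
  unfolding Eset_def Uset_def
  by (auto simp: tendsto_PInfty_eq_at_top[symmetric] intro: lim_imp_Limsup)

lemma liminf_rseq_less_top: "x \<in> Uset f D - Eset f D \<Longrightarrow> liminf (\<lambda>n. ereal (rseq f x n)) < \<infinity>"
  unfolding Eset_def Uset_def by (auto simp: filterlim_at_top_iff_liminf less_top)

locale embedding_lyapunov =
  fixes mu :: "'a::metric_space measure" and f :: "'a \<times> real \<Rightarrow> 'a \<times> real"
    and D :: "('a \<times> real) set" and W :: "'a \<Rightarrow> real \<Rightarrow> real" and k :: "real \<Rightarrow> real"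
    and beta delta :: real
  assumes compact_UNIV: "compact (UNIV :: 'a set)"
    and prob_mu: "prob_space mu" and sets_mu: "sets mu = sets borel"
    and emb: "mp_embedding (mu \<Otimes>\<^sub>M lborel) D f"
    and W_continuous: "\<And>r. 0 < r \<Longrightarrow> continuous_on UNIV (\<lambda>w. W w r)"
    and beta_pos: "0 < beta"
    and W_deriv: "\<And>w r. 0 < r \<Longrightarrow> \<exists>d. (W w has_real_derivative d) (at r) \<and> beta \<le> d \<and> d \<le> delta"
    and k_bounded: "bounded (k ` {0<..})"
    and k_tendsto: "(k \<longlongrightarrow> 0) at_top"
    and W_f: "\<And>w r. (w, r) \<in> D \<Longrightarrow> W (fst (f (w, r))) (snd (f (w, r))) \<le> W w r + k r"
begin

abbreviation M :: "('a \<times> real) measure" where "M \<equiv> mu \<Otimes>\<^sub>M lborel"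

text \<open>Extending f by the identity makes its iterates globally defined and measurable.\<close>
definition F :: "'a \<times> real \<Rightarrow> 'a \<times> real" where
  "F x = (if x \<in> D then f x else x)"

definition V :: "'a \<times> real \<Rightarrow> real" where
  "V x = (if 0 < snd x then W (fst x) (snd x) else 0)"

definition W_1_bound :: real where
  "W_1_bound = (SUP w. \<bar>W w 1\<bar>)"

lemma sets_M: "sets M = sets borel"
  by (rule sets_pair_lborel_eq_borel[OF sets_mu])

lemma open_D: "open D" and D_pos: "D \<subseteq> UNIV \<times> {0<..}" and f_continuous: "continuous_on D f"
  and inj_f: "inj_on f D" and f_pos: "f ` D \<subseteq> UNIV \<times> {0<..}"
  and emeasure_f_image: "\<And>B. B \<in> sets borel \<Longrightarrow> B \<subseteq> D \<Longrightarrow> emeasure M (f ` B) = emeasure M B"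
  using emb unfolding mp_embedding_def by auto

lemma beta_le_delta: "beta \<le> delta"
  using W_deriv[where w = w and r = 1] by auto

lemma abs_W_1_le: "\<bar>W w 1\<bar> \<le> W_1_bound"
proof -
  have "compact (range (\<lambda>w. \<bar>W w 1\<bar>))"
    using W_continuous[of 1] compact_UNIV by (intro compact_continuous_image continuous_intros) auto
  then show ?thesis
    unfolding W_1_bound_def by (intro cSUP_upper bounded_imp_bdd_above compact_imp_bounded) auto
qed

lemma W_lower: "0 < r \<Longrightarrow> beta * r - (beta + delta + W_1_bound) \<le> W w r"
  using affine_bounds_of_deriv_bounds(1)[OF W_deriv[where w = w], of r] beta_pos abs_W_1_le[of w] by simp

lemma W_upper: "0 < r \<Longrightarrow> W w r \<le> delta * r + W_1_bound"
  using affine_bounds_of_deriv_bounds(2)[OF W_deriv[where w = w], of r] beta_pos abs_W_1_le[of w] by simp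

lemma V_measurable: "V \<in> borel_measurable M"
proof -
  have "\<bar>W w s - W w r\<bar> \<le> delta * \<bar>s - r\<bar>" if "0 < r" "0 < s" for w r s
    using abs_increment_le_of_deriv_bounds[OF W_deriv[where w = w]] beta_pos that by simp
  then have "continuous_on (UNIV \<times> {0<..}) (\<lambda>x. W (fst x) (snd x))"
    using W_continuous by (intro continuous_on_Lipschitz_in_second) auto
  then have "(\<lambda>x. if x \<in> UNIV \<times> {0<..} then W (fst x) (snd x) else 0) \<in> borel_measurable borel"
    by (intro borel_measurable_continuous_on_if borel_open open_Times) auto
  then show ?thesis
    by (simp add: measurable_cong_sets[OF sets_M refl] V_def[abs_def] mem_Times_iff)
qed

lemma F_measurable: "F \<in> M \<rightarrow>\<^sub>M M"
proof -
  have "(\<lambda>x. if x \<in> D then f x else x) \<in> borel_measurable borel"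
    by (intro borel_measurable_continuous_on_if borel_open open_D f_continuous continuous_intros)
  then show ?thesis
    by (simp add: measurable_cong_sets[OF sets_M sets_M] F_def[abs_def])
qed

lemma funpow_F_Dinf: "x \<in> Dinf f D \<Longrightarrow> (F ^^ n) x = (f ^^ n) x"
  using funpow_eq_if_agree[of D F f n x] by (simp add: Dinf_eq F_def)

lemma Dinf_eq_F: "Dinf f D = {x. \<forall>n. (F ^^ n) x \<in> D}"
proof (intro equalityI subsetI)
  fix x assume "x \<in> {x. \<forall>n. (F ^^ n) x \<in> D}"
  then have "(f ^^ n) x = (F ^^ n) x" for n
    using funpow_eq_if_agree[of D f F n x] by (simp add: F_def)
  with \<open>x \<in> _\<close> show "x \<in> Dinf f D" by (simp add: Dinf_eq)
qed (simp add: funpow_F_Dinf Dinf_eq)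

lemma Dinf_subset_D: "Dinf f D \<subseteq> D"
  by (auto simp: Dinf_eq dest: spec[where x = 0])

lemma F_Dinf:
  assumes "x \<in> Dinf f D" shows "F x \<in> Dinf f D"
proof -
  have "(F ^^ Suc n) x \<in> D" for n using assms by (simp add: Dinf_eq_F del: funpow.simps)
  then show ?thesis by (simp add: Dinf_eq_F funpow_Suc_right del: funpow.simps)
qed

lemma funpow_F_Dinf_in: "x \<in> Dinf f D \<Longrightarrow> (F ^^ n) x \<in> Dinf f D"
  by (induction n) (auto simp: F_Dinf)

lemma Dinf_sets: "Dinf f D \<in> sets M"
proof -
  have [measurable]: "D \<in> sets M" "F ^^ n \<in> M \<rightarrow>\<^sub>M M" for n
    using open_D measurable_funpow[OF F_measurable] sets_M by auto
  have "Dinf f D = {x \<in> space M. \<forall>n. (F ^^ n) x \<in> D}"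
    using sets_M by (simp add: Dinf_eq_F sets_eq_imp_space_eq)
  also have "\<dots> \<in> sets M" by measurable
  finally show ?thesis .
qed

lemma V_F_le: "x \<in> D \<Longrightarrow> V (F x) \<le> V x + k (snd x)"
  using W_f[of "fst x" "snd x"] D_pos f_pos by (auto simp: V_def F_def mem_Times_iff)

lemma emeasure_sublevel_le:
  "emeasure M {x \<in> Dinf f D. V x \<le> a} \<le> ennreal (1 / beta * a + (beta + delta + W_1_bound) / beta)"
proof -
  define R where "R = (a + (beta + delta + W_1_bound)) / beta"
  have "{x \<in> Dinf f D. V x \<le> a} \<subseteq> UNIV \<times> {0..R}"
  proof
    fix x assume x: "x \<in> {x \<in> Dinf f D. V x \<le> a}"
    then have "0 < snd x" using Dinf_subset_D D_pos by auto
    then have "beta * snd x \<le> a + (beta + delta + W_1_bound)"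
      using x W_lower[of "snd x" "fst x"] by (simp add: V_def)
    then have "snd x \<le> R" using beta_pos by (simp add: R_def pos_le_divide_eq mult.commute)
    with \<open>0 < snd x\<close> show "x \<in> UNIV \<times> {0..R}" by (simp add: mem_Times_iff)
  qed
  moreover have "UNIV \<times> {0..R} \<in> sets M"
    unfolding sets_M by (intro borel_closed closed_Times) auto
  ultimately have "emeasure M {x \<in> Dinf f D. V x \<le> a} \<le> emeasure M (UNIV \<times> {0..R})"
    by (rule emeasure_mono)
  also have "\<dots> = emeasure mu UNIV * emeasure lborel {0..R}"
    using sets_mu by (intro lborel.emeasure_pair_measure_Times) auto
  also have "emeasure mu UNIV = 1"
    using prob_space.emeasure_space_1[OF prob_mu] sets_eq_imp_space_eq[OF sets_mu] by simp
  also have "emeasure lborel {0..R} = ennreal R"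
    by (cases "0 \<le> R") (simp_all add: ennreal_neg)
  finally show ?thesis by (simp add: R_def add_divide_distrib)
qed

lemma V_step: "0 < e \<Longrightarrow> \<exists>a0. \<forall>x\<in>Dinf f D. a0 \<le> V (F x) \<longrightarrow> V (F x) \<le> V x + e"
proof -
  assume "0 < e"
  obtain K where K: "\<And>y. y \<in> k ` {0<..} \<Longrightarrow> \<bar>y\<bar> \<le> K"
    using k_bounded unfolding bounded_iff real_norm_def by blast
  obtain R0 where R0: "\<And>r. R0 \<le> r \<Longrightarrow> \<bar>k r\<bar> < e"
    using tendstoD[OF k_tendsto \<open>0 < e\<close>] by (auto simp: eventually_at_top_linorder dist_real_def)
  have "V (F x) \<le> V x + e" if "x \<in> Dinf f D" "K + W_1_bound + delta * \<bar>R0\<bar> \<le> V (F x)" for x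
  proof -
    have "x \<in> D" "0 < snd x" using that(1) Dinf_subset_D D_pos by auto
    then have "V x = W (fst x) (snd x)" "\<bar>k (snd x)\<bar> \<le> K" using K by (auto simp: V_def)
    then have "delta * \<bar>R0\<bar> \<le> delta * snd x"
      using that(2) V_F_le[OF \<open>x \<in> D\<close>] W_upper[OF \<open>0 < snd x\<close>, of "fst x"] by linarith
    then have "R0 \<le> snd x" using beta_pos beta_le_delta by (simp add: mult_le_cancel_left_pos)
    then show ?thesis using V_F_le[OF \<open>x \<in> D\<close>] R0[of "snd x"] by linarith
  qed
  then show ?thesis by blast
qed

lemma Eset_eq: "Eset f D = {x \<in> Dinf f D. filterlim (\<lambda>n. V ((F ^^ n) x)) at_top sequentially}"
proof -
  have "filterlim (rseq f x) at_top sequentially \<longleftrightarrow> filterlim (\<lambda>n. V ((F ^^ n) x)) at_top sequentially"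
    if "x \<in> Dinf f D" for x
  proof -
    have pos: "0 < rseq f x n" and rseq_V: "V ((F ^^ n) x) = W (fst ((F ^^ n) x)) (rseq f x n)" for n
      using funpow_F_Dinf_in[OF that, of n] Dinf_subset_D D_pos funpow_F_Dinf[OF that]
      by (auto simp: rseq_def V_def)
    have lower: "beta * rseq f x n + - (beta + delta + W_1_bound) \<le> V ((F ^^ n) x)" for n
      using W_lower[OF pos[of n], where w = "fst ((F ^^ n) x)"] by (simp add: rseq_V)
    have upper: "1 / delta * V ((F ^^ n) x) + - (W_1_bound / delta) \<le> rseq f x n" for n
      using W_upper[OF pos[of n], where w = "fst ((F ^^ n) x)"] beta_pos beta_le_delta
      by (simp add: rseq_V field_simps)
    have "0 < 1 / delta" using beta_pos beta_le_delta by simp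
    show ?thesis
      using filterlim_at_top_of_affine_lower_bound[where g = "rseq f x", OF beta_pos lower]
        filterlim_at_top_of_affine_lower_bound[where h = "rseq f x", OF \<open>0 < 1 / delta\<close> upper]
      by blast
  qed
  then show ?thesis by (auto simp: Eset_def)
qed

theorem Eset_null: "Eset f D \<in> null_sets M"
proof -
  have [measurable]: "F \<in> M \<rightarrow>\<^sub>M M" "V \<in> borel_measurable M" "Dinf f D \<in> sets M"
    using F_measurable V_measurable Dinf_sets by auto
  have E_sets: "Eset f D \<in> sets M"
    unfolding Eset_eq by (rule escaping_set_measurable) measurable
  \<comment> \<open>Measurability of images of f is only available on a domain of positive measure.\<close>
  show ?thesis
  proof (cases "emeasure M (Dinf f D) = 0")
    case True
    then have "Dinf f D \<in> null_sets M" using Dinf_sets by auto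
    then show ?thesis by (rule null_sets_subset[OF _ E_sets]) (auto simp: Eset_def)
  next
    case False
    have preserving: "emeasure M (F ` B) = emeasure M B" if "B \<in> sets M" "B \<subseteq> Dinf f D" for B
    proof -
      have "F ` B = f ` B" using that Dinf_subset_D by (auto simp: F_def)
      then show ?thesis using emeasure_f_image that Dinf_subset_D sets_M by auto
    qed
    have inj: "inj_on F (Dinf f D)"
      using inj_on_subset[OF inj_f Dinf_subset_D] Dinf_subset_D by (auto simp: inj_on_def F_def)
    have image_sets: "F ` B \<in> sets M" if "B \<in> sets M" "B \<subseteq> Dinf f D" for B
      using image_sets_of_emeasure_preserving[OF inj Dinf_sets False preserving that] .
    have "0 < 1 / beta" using beta_pos by simp
    interpret measure_preserving_lyapunov M F "Dinf f D" V "1 / beta" "(beta + delta + W_1_bound) / beta"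
      by (rule measure_preserving_lyapunov.intro[OF F_measurable Dinf_sets F_Dinf inj image_sets
            preserving V_measurable \<open>0 < 1 / beta\<close> emeasure_sublevel_le V_step])
    show ?thesis using escaping_null by (simp add: Eset_eq escaping_def)
  qed
qed

end

theorem mainTheorem4:
  fixes mu :: "'a::{metric_space, topological_ab_group_add} measure"
    and psi :: "real \<Rightarrow> 'a"
    and f :: "'a \<times> real \<Rightarrow> 'a \<times> real"
    and D :: "('a \<times> real) set"
    and W :: "'a \<Rightarrow> real \<Rightarrow> real"
    and k :: "real \<Rightarrow> real"
    and beta delta :: real
  assumes compact_Omega: "compact (UNIV :: 'a set)"
    and psi_cont: "continuous_on UNIV psi"
    and psi_hom: "\<And>s t. psi (s + t) = psi s + psi t"
    and psi_dense: "closure (range psi) = UNIV"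
    and haar: "haar_prob mu"
    and emb: "mp_embedding (mu \<Otimes>\<^sub>M lborel) D f"
    and W_C1: "C1_psi_r psi W"
    and beta_pos: "beta > 0" and delta_pos: "delta > 0"
    and W_r_bounds: "\<And>w r. r > 0 \<Longrightarrow> \<exists>d. (W w has_real_derivative d) (at r) \<and> beta \<le> d \<and> d \<le> delta"
    and k_decr: "antimono_on {0<..} k"
    and k_bdd: "bounded (k ` {0<..})"
    and k_lim: "(k \<longlongrightarrow> 0) at_top"
    and W_f: "\<And>w r. (w, r) \<in> D \<Longrightarrow> W (fst (f (w, r))) (snd (f (w, r))) \<le> W w r + k r"
  shows "\<exists>Z. Z \<in> null_sets (mu \<Otimes>\<^sub>M lborel) \<and> Z \<subseteq> Uset f D \<and>
           (\<forall>x \<in> Uset f D - Z. liminf (\<lambda>n. ereal (rseq f x n)) < \<infinity>) \<and>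
           Eset f D \<subseteq> Z \<and> Eset f D \<in> null_sets (mu \<Otimes>\<^sub>M lborel)"
proof -
  have "prob_space mu" "sets mu = sets borel" using haar by (auto simp: haar_prob_def)
  moreover have "continuous_on UNIV (\<lambda>w. W w r)" if "0 < r" for r
    using W_C1 that by (auto simp: C1_psi_r_def C1_psi_def)
  ultimately interpret embedding_lyapunov mu f D W k beta delta
    by (intro embedding_lyapunov.intro compact_Omega emb beta_pos W_r_bounds k_bdd k_lim W_f)
  show ?thesis
    by (intro exI[of _ "Eset f D"] conjI ballI order_refl Eset_null Eset_subset_Uset liminf_rseq_less_top)
qed

end
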